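(* In the two-type population dependent branching process with parameters $p\in(0,1]$, $q\in[0,1]$, let $n(t)=n_A(t)+n_B(t)$ and let $W$ be the almost sure limit of $e^{-t}n_A(t)$ (a strictly positive finite random variable). Then $e^{-t}n(t)\to W+(1-p)W/p=:W_\infty$ almost surely as $t\to\infty$. In particular, the stopping times $T_n=\inf\{t\ge0: n(t)=n\}$ satisfy $T_n-\log n\to-\log W_\infty$ almost surely as $n\to\infty$, where $W_\infty$ is a strictly positive finite random variable.
   Context: Population dependent branching process: a continuous-time Markov process started at time $0$ with two individuals, one of type $A$ and one of type $B$; individuals live forever. Let $n_A(t), n_B(t)$ be the numbers of type $A$, $B$ individuals at time $t$ ($n_A(0)=n_B(0)=1$). At time $t$, each type $A$ individual gives birth to type $A$ individuals at rate $q$ and to type $B$ individuals at rate $(1-p)(1-q)/p$; each type $B$ individual gives birth to type $A$ individuals at rate $\frac{n_A(t)}{n_B(t)}(1-q)$ and to type $B$ individuals at rate $\frac{n_A(t)}{n_B(t)}\cdot\frac{q(1-p)}{p}$. *)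

theory Defs
  imports "HOL-Probability.Probability"
begin

text \<open>
  Two-type population dependent branching process (continuous-time Markov chain),
  realised by the standard jump-chain / holding-time construction from rates.  From state (a, b) the chain jumps to (a+1, b)
  with rate rateA and to (a, b+1) with rate rateB, where these are the
  total rates of all individuals as described in the paper.
\<close>

definition rateA :: "real \<Rightarrow> real \<Rightarrow> nat \<times> nat \<Rightarrow> real" where
  "rateA p q s = (let a = real (fst s); b = real (snd s) in
      a * q + b * ((a / b) * (1 - q)))"

definition rateB :: "real \<Rightarrow> real \<Rightarrow> nat \<times> nat \<Rightarrow> real" where
  "rateB p q s = (let a = real (fst s); b = real (snd s) in
      a * ((1 - p) * (1 - q) / p) + b * ((a / b) * (q * (1 - p) / p)))"

definition total_rate :: "real \<Rightarrow> real \<Rightarrow> nat \<times> nat \<Rightarrow> real" where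
  "total_rate p q s = rateA p q s + rateB p q s"

text \<open>Embedded jump chain driven by uniform variables U k:
  the k-th jump is an A-birth iff U k < rateA / total_rate.\<close>

fun jump_chain :: "real \<Rightarrow> real \<Rightarrow> (nat \<Rightarrow> real) \<Rightarrow> nat \<Rightarrow> nat \<times> nat" where
  "jump_chain p q u 0 = (1, 1)"
| "jump_chain p q u (Suc k) =
     (let s = jump_chain p q u k in
      if u k < rateA p q s / total_rate p q s then (fst s + 1, snd s) else (fst s, snd s + 1))"

text \<open>Jump times: J 0 = 0, J (k+1) = J k + e k / total_rate (state k),
  with e k standard exponential variables.\<close>

definition jump_time :: "real \<Rightarrow> real \<Rightarrow> (nat \<Rightarrow> real) \<Rightarrow> (nat \<Rightarrow> real) \<Rightarrow> nat \<Rightarrow> real" where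
  "jump_time p q u e k = (\<Sum>i<k. e i / total_rate p q (jump_chain p q u i))"

definition num_jumps :: "real \<Rightarrow> real \<Rightarrow> (nat \<Rightarrow> real) \<Rightarrow> (nat \<Rightarrow> real) \<Rightarrow> real \<Rightarrow> nat" where
  "num_jumps p q u e t = card {k. 0 < k \<and> jump_time p q u e k \<le> t}"

definition state_at :: "real \<Rightarrow> real \<Rightarrow> (nat \<Rightarrow> real) \<Rightarrow> (nat \<Rightarrow> real) \<Rightarrow> real \<Rightarrow> nat \<times> nat" where
  "state_at p q u e t = jump_chain p q u (num_jumps p q u e t)"

definition nA :: "real \<Rightarrow> real \<Rightarrow> (nat \<Rightarrow> real) \<Rightarrow> (nat \<Rightarrow> real) \<Rightarrow> real \<Rightarrow> nat" where
  "nA p q u e t = fst (state_at p q u e t)"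

definition nB :: "real \<Rightarrow> real \<Rightarrow> (nat \<Rightarrow> real) \<Rightarrow> (nat \<Rightarrow> real) \<Rightarrow> real \<Rightarrow> nat" where
  "nB p q u e t = snd (state_at p q u e t)"

definition ntot :: "real \<Rightarrow> real \<Rightarrow> (nat \<Rightarrow> real) \<Rightarrow> (nat \<Rightarrow> real) \<Rightarrow> real \<Rightarrow> nat" where
  "ntot p q u e t = nA p q u e t + nB p q u e t"

definition hit_time :: "real \<Rightarrow> real \<Rightarrow> (nat \<Rightarrow> real) \<Rightarrow> (nat \<Rightarrow> real) \<Rightarrow> nat \<Rightarrow> real" where
  "hit_time p q u e n = Inf {t. 0 \<le> t \<and> ntot p q u e t = n}"

end

(*
  In every state the total birth rate is n_A/p and a birth is of type A with
  probability p, whatever q is.  So the k-th jump is an A-birth iff U_k < p, and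
  after k jumps n_A = 1 + #{i < k. U_i < p} and n = k + 2.  By the strong law of
  large numbers (from Hoeffding's inequality and Borel-Cantelli) n/n_A tends to 1/p
  along the jumps, hence e^-t n(t) tends to W/p = W + (1 - p) W/p.  The population
  first reaches n at the (n - 2)-nd jump time T_n, and T_n tends to infinity, so
  e^-T_n n tends to W/p as well, i.e. T_n - log n tends to -log (W/p).
*)

theory Submission
  imports Defs
begin

lemma AE_metric_LIMSEQ_I:
  fixes f :: "nat \<Rightarrow> 'a \<Rightarrow> 'b::metric_space"
  assumes "\<And>\<epsilon>. 0 < \<epsilon> \<Longrightarrow> AE x in M. eventually (\<lambda>n. dist (f n x) (l x) < \<epsilon>) sequentially"
  shows "AE x in M. (\<lambda>n. f n x) \<longlonglongrightarrow> l x"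
proof -
  have "AE x in M. \<forall>m::nat. eventually (\<lambda>n. dist (f n x) (l x) < 1 / Suc m) sequentially"
    by (subst AE_all_countable) (auto intro: assms)
  then show ?thesis
  proof eventually_elim
    case (elim x)
    show ?case
    proof (rule tendstoI)
      fix \<epsilon> :: real assume "0 < \<epsilon>"
      then obtain m :: nat where "1 / Suc m < \<epsilon>"
        by (metis nat_approx_posE)
      with elim[rule_format, of m] show "eventually (\<lambda>n. dist (f n x) (l x) < \<epsilon>) sequentially"
        by (auto elim: eventually_mono)
    qed
  qed
qed

lemma (in prob_space) indep_sets_reindex:
  assumes "inj_on g I" and indep: "indep_sets F (g ` I)"
  shows "indep_sets (\<lambda>i. F (g i)) I"
proof (rule indep_setsI)
  show "F (g i) \<subseteq> events" if "i \<in> I" for i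
    using indep that unfolding indep_sets_def by simp
  fix A J
  assume J: "J \<noteq> {}" "J \<subseteq> I" "finite J" and A: "\<forall>j\<in>J. A j \<in> F (g j)"
  have inj: "inj_on g J" using assms(1) J(2) by (rule inj_on_subset)
  define B where "B = (\<lambda>k. A (the_inv_into J g k))"
  have B: "B (g j) = A j" if "j \<in> J" for j
    using inj that by (simp add: B_def the_inv_into_f_f)
  have "prob (\<Inter>k\<in>g ` J. B k) = (\<Prod>k\<in>g ` J. prob (B k))"
    by (rule indep_setsD[OF indep]) (use J A B in auto)
  moreover have "(\<Inter>k\<in>g ` J. B k) = (\<Inter>j\<in>J. A j)"
    by (simp add: image_image B)
  moreover have "(\<Prod>k\<in>g ` J. prob (B k)) = (\<Prod>j\<in>J. prob (A j))"
    using inj by (simp add: prod.reindex B)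
  ultimately show "prob (\<Inter>j\<in>J. A j) = (\<Prod>j\<in>J. prob (A j))"
    by simp
qed

lemma (in prob_space) indep_vars_reindex:
  assumes "inj_on g I" and "indep_vars M' X (g ` I)"
  shows "indep_vars (\<lambda>i. M' (g i)) (\<lambda>i. X (g i)) I"
proof -
  have rv: "\<forall>k\<in>g ` I. random_variable (M' k) (X k)"
    and indep: "indep_sets (\<lambda>k. {X k -` A \<inter> space M |A. A \<in> sets (M' k)}) (g ` I)"
    using assms(2) unfolding indep_vars_def2 by (rule conjunct1, rule conjunct2)
  show ?thesis
    unfolding indep_vars_def2
    using rv indep_sets_reindex[OF assms(1) indep] by blast
qed

lemma (in prob_space) Hoeffding_ineq_mean_abs_ge:
  fixes X :: "nat \<Rightarrow> 'a \<Rightarrow> real"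
  assumes indep: "indep_vars (\<lambda>_. borel) X UNIV"
    and bounded: "\<And>i. AE x in M. X i x \<in> {a..b}" and "a < b"
    and expectation: "\<And>i. expectation (X i) = \<mu>"
    and "0 \<le> \<epsilon>"
  shows "prob {x\<in>space M. real n * \<epsilon> \<le> \<bar>(\<Sum>i<n. X i x) - real n * \<mu>\<bar>}
           \<le> 2 * exp (-2 * \<epsilon>\<^sup>2 / (b - a)\<^sup>2) ^ n"
proof (cases "n = 0")
  case True
  then show ?thesis by (simp add: prob_space)
next
  case False
  interpret Hoeffding_ineq M "{..<n}" X "\<lambda>_. a" "\<lambda>_. b" "real n * \<mu>"
  proof unfold_locales
    show "indep_vars (\<lambda>_. borel) X {..<n}"
      using indep by (rule indep_vars_subset) simp
    show "real n * \<mu> \<equiv> \<Sum>i<n. expectation (X i)"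
      by (simp add: expectation)
  qed (use bounded in auto)
  have "0 < (\<Sum>i<n. (b - a)\<^sup>2)"
    using False \<open>a < b\<close> by simp
  then have "prob {x\<in>space M. real n * \<epsilon> \<le> \<bar>(\<Sum>i<n. X i x) - real n * \<mu>\<bar>}
          \<le> 2 * exp (-2 * (real n * \<epsilon>)\<^sup>2 / (\<Sum>i<n. (b - a)\<^sup>2))"
    using Hoeffding_ineq_abs_ge[of "real n * \<epsilon>"] \<open>0 \<le> \<epsilon>\<close> by simp
  also have "-2 * (real n * \<epsilon>)\<^sup>2 / (\<Sum>i<n. (b - a)\<^sup>2) = real n * (-2 * \<epsilon>\<^sup>2 / (b - a)\<^sup>2)"
    using False \<open>a < b\<close> by (simp add: power_mult_distrib power2_eq_square)
  also have "exp (real n * (-2 * \<epsilon>\<^sup>2 / (b - a)\<^sup>2)) = exp (-2 * \<epsilon>\<^sup>2 / (b - a)\<^sup>2) ^ n"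
    by (rule exp_of_nat_mult)
  finally show ?thesis .
qed

theorem (in prob_space) strong_law_bounded_indep:
  fixes X :: "nat \<Rightarrow> 'a \<Rightarrow> real"
  assumes indep: "indep_vars (\<lambda>_. borel) X UNIV"
    and bounded: "\<And>i. AE x in M. X i x \<in> {a..b}" and "a < b"
    and expectation: "\<And>i. expectation (X i) = \<mu>"
  shows "AE x in M. (\<lambda>n. (\<Sum>i<n. X i x) / real n) \<longlonglongrightarrow> \<mu>"
proof (rule AE_metric_LIMSEQ_I)
  fix \<epsilon> :: real assume "0 < \<epsilon>"
  have [measurable]: "X i \<in> borel_measurable M" for i
    using indep unfolding indep_vars_def by blast
  define A where "A n = {x\<in>space M. real n * \<epsilon> \<le> \<bar>(\<Sum>i<n. X i x) - real n * \<mu>\<bar>}" for n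
  have [measurable]: "A n \<in> sets M" for n
    unfolding A_def by measurable
  have bound: "measure M (A n) \<le> 2 * exp (-2 * \<epsilon>\<^sup>2 / (b - a)\<^sup>2) ^ n" for n
    unfolding A_def using \<open>0 < \<epsilon>\<close> by (intro Hoeffding_ineq_mean_abs_ge[OF assms]) simp
  have "summable (\<lambda>n. 2 * exp (-2 * \<epsilon>\<^sup>2 / (b - a)\<^sup>2) ^ n)"
    using \<open>0 < \<epsilon>\<close> \<open>a < b\<close> by (intro summable_mult summable_geometric) auto
  then have "summable (\<lambda>n. measure M (A n))"
    by (rule summable_comparison_test'[where N = 0]) (use bound in simp)
  then have "AE x in M. eventually (\<lambda>n. x \<in> space M - A n) sequentially"
    by (intro borel_cantelli_AE1) (auto simp: less_top[symmetric])
  then show "AE x in M. eventually (\<lambda>n. dist ((\<Sum>i<n. X i x) / real n) \<mu> < \<epsilon>) sequentially"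
  proof eventually_elim
    case (elim x)
    then show ?case
      using eventually_gt_at_top[of 0]
    proof eventually_elim
      case (elim n)
      then have "\<bar>(\<Sum>i<n. X i x) - real n * \<mu>\<bar> < real n * \<epsilon>"
        by (auto simp: A_def)
      moreover have "(\<Sum>i<n. X i x) / real n - \<mu> = ((\<Sum>i<n. X i x) - real n * \<mu>) / real n"
        using \<open>0 < n\<close> by (simp add: field_simps)
      ultimately show ?case
        using \<open>0 < n\<close> by (simp add: dist_real_def divide_less_eq mult.commute)
    qed
  qed
qed

lemma (in prob_space) expectation_indicator_less_uniform:
  fixes X :: "'a \<Rightarrow> real"
  assumes D: "distributed M lborel X (\<lambda>x. ennreal (indicator {0..1} x))" and "0 \<le> c" "c \<le> 1"
  shows "expectation (\<lambda>x. indicator {..<c} (X x)) = c"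
proof -
  have "emeasure M (X -` {..<c} \<inter> space M) = (\<integral>\<^sup>+x. ennreal (indicator {0..1} x) * indicator {..<c} x \<partial>lborel)"
    by (rule distributed_emeasure[OF D]) simp
  also have "\<dots> = (\<integral>\<^sup>+x. indicator {0..<c} x \<partial>lborel)"
    using \<open>c \<le> 1\<close> by (intro nn_integral_cong) (auto split: split_indicator)
  also have "\<dots> = ennreal c"
    using \<open>0 \<le> c\<close> by simp
  finally have "prob (X -` {..<c} \<inter> space M) = c"
    using \<open>0 \<le> c\<close> by (simp add: emeasure_eq_measure)
  moreover have "(\<lambda>x. indicator {..<c} (X x) :: real) = indicator (X -` {..<c})"
    by (auto simp: fun_eq_iff split: split_indicator)
  ultimately show ?thesis
    by simp
qed

lemma (in prob_space) AE_exponential_pos: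
  assumes D: "distributed M lborel X (exponential_density l)"
  shows "AE x in M. 0 < X x"
proof -
  have "AE x in lborel. 0 < ennreal (exponential_density l x) \<longrightarrow> 0 < x"
    using AE_lborel_singleton[of 0] by eventually_elim (auto simp: exponential_density_def)
  then show ?thesis
    by (subst distributed_AE2[OF D]) auto
qed

definition count_below :: "real \<Rightarrow> (nat \<Rightarrow> real) \<Rightarrow> nat \<Rightarrow> nat" where
  "count_below p u k = card {i. i < k \<and> u i < p}"

lemma count_below_0 [simp]: "count_below p u 0 = 0"
  by (simp add: count_below_def)

lemma count_below_Suc: "count_below p u (Suc k) = count_below p u k + (if u k < p then 1 else 0)"
proof -
  have "{i. i < Suc k \<and> u i < p} = {i. i < k \<and> u i < p} \<union> (if u k < p then {k} else {})"
    by (auto simp: less_Suc_eq)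
  then show ?thesis
    by (simp add: count_below_def)
qed

lemma count_below_le: "count_below p u k \<le> k"
proof -
  have "count_below p u k \<le> card {..<k}"
    unfolding count_below_def by (rule card_mono) auto
  then show ?thesis by simp
qed

lemma count_below_eq_sum_indicator: "real (count_below p u k) = (\<Sum>i<k. indicator {..<p} (u i))"
  by (induction k) (auto simp: count_below_Suc)

lemma rateA_eq: "b \<noteq> 0 \<Longrightarrow> rateA p q (a, b) = real a"
  by (simp add: rateA_def Let_def field_simps)

lemma total_rate_eq: "p \<noteq> 0 \<Longrightarrow> b \<noteq> 0 \<Longrightarrow> total_rate p q (a, b) = real a / p"
  by (simp add: total_rate_def rateA_def rateB_def Let_def field_simps)

lemma jump_chain_eq:
  assumes "p \<noteq> 0"
  shows "jump_chain p q u k = (Suc (count_below p u k), Suc (k - count_below p u k))"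
proof (induction k)
  case 0
  then show ?case by simp
next
  case (Suc k)
  have "rateA p q (Suc a, Suc b) / total_rate p q (Suc a, Suc b) = p" for a b
    using assms by (simp add: rateA_eq total_rate_eq del: of_nat_Suc)
  then show ?case
    using count_below_le[of p u k] by (simp add: Suc Let_def count_below_Suc Suc_diff_le)
qed

lemma ratio_shifted_tendsto_inverse:
  fixes c :: "nat \<Rightarrow> nat"
  assumes lim: "(\<lambda>n. real (c n) / real n) \<longlonglongrightarrow> r" and "r \<noteq> 0"
  shows "(\<lambda>n. real (n + 2) / real (Suc (c n))) \<longlonglongrightarrow> 1 / r"
proof -
  have "(\<lambda>n. (1 + 2 / real n) / (real (c n) / real n + 1 / real n)) \<longlonglongrightarrow> (1 + 0) / (r + 0)"
    by (intro tendsto_intros lim) (use \<open>r \<noteq> 0\<close> in auto)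
  moreover have "eventually (\<lambda>n. (1 + 2 / real n) / (real (c n) / real n + 1 / real n)
                   = real (n + 2) / real (Suc (c n))) sequentially"
    using eventually_gt_at_top[of 0]
  proof eventually_elim
    case (elim n)
    have "real (c n) / real n + 1 / real n = real (Suc (c n)) / real n"
      by (simp add: add_divide_distrib)
    moreover have "1 + 2 / real n = real (n + 2) / real n"
      using elim by (simp add: field_simps)
    ultimately show ?case
      using elim by simp
  qed
  ultimately show ?thesis
    by (simp add: Lim_transform_eventually)
qed

locale birth_process =
  fixes p q :: real and u e :: "nat \<Rightarrow> real"
  assumes p_pos: "0 < p" and holding_pos: "\<And>k. 0 < e k"
begin

abbreviation "J \<equiv> jump_time p q u e"
abbreviation "N \<equiv> num_jumps p q u e"

lemma jump_time_0 [simp]: "J 0 = 0"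
  by (simp add: jump_time_def)

lemma jump_time_Suc: "J (Suc k) = J k + e k * p / real (Suc (count_below p u k))"
  using p_pos by (simp add: jump_time_def jump_chain_eq total_rate_eq del: of_nat_Suc)

lemma strict_mono_jump_time: "strict_mono J"
  unfolding strict_mono_Suc_iff
  using p_pos holding_pos by (simp add: jump_time_Suc del: of_nat_Suc)

lemma jump_time_nonneg: "0 \<le> J n"
  using strict_mono_less_eq[OF strict_mono_jump_time, of 0 n] by simp

lemma num_jumps_eqI:
  assumes "J n \<le> t" "t < J (Suc n)"
  shows "N t = n"
proof -
  have "J k \<le> t \<longleftrightarrow> k \<le> n" for k
  proof
    assume "J k \<le> t"
    with assms(2) have "J k < J (Suc n)" by simp
    then show "k \<le> n"
      using strict_mono_less[OF strict_mono_jump_time] by simp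
  next
    assume "k \<le> n"
    then show "J k \<le> t"
      using assms(1) strict_mono_less_eq[OF strict_mono_jump_time] by (meson order_trans)
  qed
  then have "{k. 0 < k \<and> J k \<le> t} = {k. 0 < k \<and> k \<le> n}"
    by simp
  also have "\<dots> = {1..n}"
    by auto
  finally show ?thesis
    by (simp add: num_jumps_def)
qed

lemma num_jumps_jump_time [simp]: "N (J n) = n"
  using strict_mono_jump_time by (intro num_jumps_eqI) (auto simp: strict_mono_def)

lemma nA_eq: "nA p q u e t = Suc (count_below p u (N t))"
  using p_pos by (simp add: nA_def state_at_def jump_chain_eq)

lemma ntot_eq: "ntot p q u e t = N t + 2"
  using p_pos count_below_le[of p u "N t"]
  by (simp add: ntot_def nA_def nB_def state_at_def jump_chain_eq)

lemma filterlim_jump_time_at_top: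
  assumes conv: "((\<lambda>t. exp (- t) * real (nA p q u e t)) \<longlongrightarrow> W) at_top" and "W \<noteq> 0"
  shows "filterlim J at_top sequentially"
proof -
  \<comment> \<open>After an explosion num_jumps is the card of an infinite set, i.e. 0, so nA would be 1.\<close>
  have "\<exists>k. B < J k" for B
  proof (rule ccontr)
    assume "\<nexists>k. B < J k"
    then have all_jumps: "{k. 0 < k \<and> J k \<le> t} = {0<..}" if "B \<le> t" for t
      using that by (auto simp: not_less intro: order_trans)
    have "eventually (\<lambda>t. exp (- t) * real (nA p q u e t) = exp (- t)) at_top"
      using eventually_ge_at_top[of B]
      by eventually_elim (simp add: nA_def state_at_def num_jumps_def all_jumps infinite_Ioi)
    then have "((\<lambda>t. exp (- t)) \<longlongrightarrow> W) at_top"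
      using conv by (rule Lim_transform_eventually[rotated])
    moreover have "((\<lambda>t::real. exp (- t)) \<longlongrightarrow> 0) at_top"
      by (rule filterlim_compose[OF exp_at_bot filterlim_uminus_at_bot_at_top])
    ultimately show False
      using \<open>W \<noteq> 0\<close> tendsto_unique by force
  qed
  then show ?thesis
    unfolding filterlim_at_top
  proof (intro allI)
    fix B
    obtain k where k: "B < J k"
      using \<open>\<exists>k. B < J k\<close> by blast
    show "eventually (\<lambda>n. B \<le> J n) sequentially"
      using eventually_ge_at_top[of k]
    proof eventually_elim
      case (elim n)
      then have "J k \<le> J n"
        by (simp add: strict_mono_less_eq[OF strict_mono_jump_time])
      with k show ?case
        by simp
    qed
  qed
qed

context
  assumes nonexplosive: "filterlim J at_top sequentially"
begin

lemma jump_time_num_jumps: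
  assumes "0 \<le> t"
  shows "J (N t) \<le> t" "t < J (Suc (N t))"
proof -
  have "eventually (\<lambda>k. t < J k) sequentially"
    using nonexplosive by (simp add: filterlim_at_top_dense)
  then obtain m where "t < J m"
    by (auto simp: eventually_sequentially)
  moreover have "\<not> t < J 0"
    using assms by simp
  ultimately obtain n where "\<forall>i\<le>n. \<not> t < J i" "t < J (Suc n)"
    using ex_least_nat_less[of "\<lambda>k. t < J k"] by blast
  then have "J n \<le> t" "t < J (Suc n)"
    by auto
  moreover from this have "N t = n"
    by (rule num_jumps_eqI)
  ultimately show "J (N t) \<le> t" "t < J (Suc (N t))"
    by simp_all
qed

lemma filterlim_num_jumps_at_top: "filterlim N at_top at_top"
  unfolding filterlim_at_top
proof
  fix n
  show "eventually (\<lambda>t. n \<le> N t) at_top"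
    using eventually_ge_at_top[of "J n"]
  proof eventually_elim
    case (elim t)
    then have "J n < J (Suc (N t))"
      using jump_time_num_jumps(2)[of t] jump_time_nonneg[of n] by simp
    then show ?case
      using strict_mono_less[OF strict_mono_jump_time] by simp
  qed
qed

lemma hit_time_eq:
  assumes "2 \<le> n"
  shows "hit_time p q u e n = J (n - 2)"
proof -
  have "{t. 0 \<le> t \<and> ntot p q u e t = n} = {J (n - 2)..<J (Suc (n - 2))}"
  proof (intro set_eqI iffI)
    fix t
    assume "t \<in> {t. 0 \<le> t \<and> ntot p q u e t = n}"
    then have "0 \<le> t" "N t = n - 2"
      by (auto simp: ntot_eq)
    then show "t \<in> {J (n - 2)..<J (Suc (n - 2))}"
      using jump_time_num_jumps[of t] by auto
  next
    fix t
    assume t: "t \<in> {J (n - 2)..<J (Suc (n - 2))}"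
    then have "N t = n - 2"
      by (auto intro: num_jumps_eqI)
    moreover have "0 \<le> t"
      using t jump_time_nonneg[of "n - 2"] by auto
    ultimately show "t \<in> {t. 0 \<le> t \<and> ntot p q u e t = n}"
      using assms by (simp add: ntot_eq)
  qed
  moreover have "J (n - 2) < J (Suc (n - 2))"
    using strict_mono_jump_time by (simp add: strict_mono_def)
  ultimately show ?thesis
    by (simp add: hit_time_def)
qed

end

context
  fixes W :: real
  assumes births_A: "(\<lambda>n. real (count_below p u n) / real n) \<longlonglongrightarrow> p"
    and conv: "((\<lambda>t. exp (- t) * real (nA p q u e t)) \<longlongrightarrow> W) at_top"
begin

lemma ntot_tendsto:
  assumes "W \<noteq> 0"
  shows "((\<lambda>t. exp (- t) * real (ntot p q u e t)) \<longlongrightarrow> W / p) at_top"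
proof -
  have "(\<lambda>n. real (n + 2) / real (Suc (count_below p u n))) \<longlonglongrightarrow> 1 / p"
    by (rule ratio_shifted_tendsto_inverse[OF births_A]) (use p_pos in simp)
  from filterlim_compose[OF this filterlim_num_jumps_at_top[OF filterlim_jump_time_at_top[OF conv assms]]]
  have "((\<lambda>t. exp (- t) * real (nA p q u e t) * (real (N t + 2) / real (Suc (count_below p u (N t)))))
              \<longlongrightarrow> W * (1 / p)) at_top"
    by (intro tendsto_mult conv)
  moreover have "exp (- t) * real (nA p q u e t) * (real (N t + 2) / real (Suc (count_below p u (N t))))
                 = exp (- t) * real (ntot p q u e t)" for t
    by (simp add: nA_eq ntot_eq del: of_nat_Suc of_nat_add)
  ultimately show ?thesis
    by simp
qed

lemma hit_time_minus_ln_tendsto: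
  assumes "0 < W"
  shows "(\<lambda>n. hit_time p q u e n - ln (real n)) \<longlonglongrightarrow> - ln (W / p)"
proof -
  have nonexplosive: "filterlim J at_top sequentially"
    using filterlim_jump_time_at_top[OF conv] assms by simp
  have "filterlim (\<lambda>n. J (n - 2)) at_top sequentially"
    by (rule filterlim_compose[OF nonexplosive filterlim_minus_const_nat_at_top])
  moreover have "((\<lambda>t. exp (- t) * real (ntot p q u e t)) \<longlongrightarrow> W / p) at_top"
    using assms by (intro ntot_tendsto) simp
  ultimately have "(\<lambda>n. exp (- J (n - 2)) * real (ntot p q u e (J (n - 2)))) \<longlonglongrightarrow> W / p"
    by (rule filterlim_compose[rotated])
  moreover have "eventually (\<lambda>n. exp (- J (n - 2)) * real (ntot p q u e (J (n - 2)))
                   = exp (- hit_time p q u e n) * real n) sequentially"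
    using eventually_ge_at_top[of 2]
    by eventually_elim (simp add: ntot_eq hit_time_eq[OF nonexplosive])
  ultimately have "(\<lambda>n. exp (- hit_time p q u e n) * real n) \<longlonglongrightarrow> W / p"
    by (rule Lim_transform_eventually)
  moreover have "W / p \<noteq> 0"
    using \<open>0 < W\<close> p_pos by simp
  ultimately have "(\<lambda>n. - ln (exp (- hit_time p q u e n) * real n)) \<longlonglongrightarrow> - ln (W / p)"
    by (intro tendsto_intros)
  moreover have "eventually (\<lambda>n. - ln (exp (- hit_time p q u e n) * real n)
                   = hit_time p q u e n - ln (real n)) sequentially"
    using eventually_gt_at_top[of 0] by eventually_elim (simp add: ln_mult)
  ultimately show ?thesis
    by (rule Lim_transform_eventually)
qed

end

end

theorem lemma5p3:
  fixes M :: "'a measure" and U E :: "nat \<Rightarrow> 'a \<Rightarrow> real" and W :: "'a \<Rightarrow> real"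
    and p q :: real
  assumes "prob_space M"
    and "0 < p" "p \<le> 1" "0 \<le> q" "q \<le> 1"
    and "prob_space.indep_vars M (\<lambda>_. borel) (case_sum U E) UNIV"
    and "\<And>k. distributed M lborel (U k) (\<lambda>x. ennreal (indicator {0..1} x))"
    and "\<And>k. distributed M lborel (E k) (exponential_density 1)"
    and "W \<in> borel_measurable M"
    and "AE \<omega> in M. ((\<lambda>t. exp (- t) * real (nA p q (\<lambda>k. U k \<omega>) (\<lambda>k. E k \<omega>) t))
                         \<longlongrightarrow> W \<omega>) at_top"
    and "AE \<omega> in M. 0 < W \<omega>"
  shows "AE \<omega> in M.
           ((\<lambda>t. exp (- t) * real (ntot p q (\<lambda>k. U k \<omega>) (\<lambda>k. E k \<omega>) t))
              \<longlongrightarrow> W \<omega> + (1 - p) * W \<omega> / p) at_top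
         \<and> ((\<lambda>n. hit_time p q (\<lambda>k. U k \<omega>) (\<lambda>k. E k \<omega>) n - ln (real n))
              \<longlonglongrightarrow> - ln (W \<omega> + (1 - p) * W \<omega> / p))
         \<and> 0 < W \<omega> + (1 - p) * W \<omega> / p"
proof -
  interpret prob_space M by fact
  have "indep_vars (\<lambda>_. borel) (case_sum U E) (range Inl)"
    using assms(6) by (rule indep_vars_subset) simp
  then have "indep_vars (\<lambda>_. borel) U UNIV"
    using indep_vars_reindex[of Inl UNIV "\<lambda>_. borel" "case_sum U E"] by simp
  then have "indep_vars (\<lambda>_. borel) (\<lambda>i \<omega>. indicator {..<p} (U i \<omega>) :: real) UNIV"
    by (rule indep_vars_compose2) simp
  then have "AE \<omega> in M. (\<lambda>n. (\<Sum>i<n. indicator {..<p} (U i \<omega>)) / real n) \<longlonglongrightarrow> p"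
    by (rule strong_law_bounded_indep[where a = 0 and b = 1])
       (use assms(2,3,7) in \<open>auto simp: expectation_indicator_less_uniform split: split_indicator\<close>)
  moreover have "AE \<omega> in M. \<forall>k. 0 < E k \<omega>"
    using assms(8) by (subst AE_all_countable) (blast intro: AE_exponential_pos)
  ultimately show ?thesis
    using assms(10,11)
  proof eventually_elim
    case (elim \<omega>)
    interpret birth_process p q "\<lambda>k. U k \<omega>" "\<lambda>k. E k \<omega>"
      using assms(2) elim(2) by unfold_locales simp_all
    have births_A: "(\<lambda>n. real (count_below p (\<lambda>k. U k \<omega>) n) / real n) \<longlonglongrightarrow> p"
      using elim(1) by (simp add: count_below_eq_sum_indicator)
    have "W \<omega> + (1 - p) * W \<omega> / p = W \<omega> / p"
      using assms(2) by (simp add: field_simps)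
    then show ?case
      using ntot_tendsto[OF births_A elim(3)] hit_time_minus_ln_tendsto[OF births_A elim(3)]
        elim(4) assms(2) by simp
  qed
qed

end
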